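(* Let $n\ge 2$ be an integer. No relative equilibrium of the Newtonian planar $(1+n)$-body problem whose configuration consists of a central mass at the origin and a regular $n$-gon centered at the origin is really perverse.
   Context: The Newtonian planar $N$-body problem (gravitational constant $1$): bodies with masses $\mu_i>0$ at positions $r_i\in\mathbb{C}$ satisfy $\mu_i\ddot r_i=\sum_{j\ne i}\mu_i\mu_j\,\frac{r_j-r_i}{|r_j-r_i|^3}$. A relative equilibrium (angular velocity $1$) is a motion $r_i(t)=r_ie^{it}$ that is a solution. A mass system for this configuration is a pair $(m_0,m_1)$ of positive numbers: mass $m_0$ at the center and mass $m_1$ at every vertex of the $n$-gon; total mass $m_0+nm_1$, center of mass at the origin. The relative equilibrium is really perverse if there exist two distinct mass systems with the same total mass and the same center of mass for each of which $r_i(t)=r_ie^{it}$ is a solution. *)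

theory Defs
  imports "HOL-Analysis.Analysis"
begin

text \<open>The motion r_i(t) = r_i e^{it} is a solution of the
  Newtonian N-body equations (gravitational constant 1) iff for all t and all i,
  mu_i * (second derivative of r_i e^{it}) = sum over j ~= i of
  mu_i mu_j (r_j(t) - r_i(t)) / |r_j(t) - r_i(t)|^3.
  The second derivative of r_i e^{it} is - r_i e^{it}; we require also that no two
  bodies collide.\<close>

definition rel_eq_solution :: "nat \<Rightarrow> (nat \<Rightarrow> real) \<Rightarrow> (nat \<Rightarrow> complex) \<Rightarrow> bool" where
  "rel_eq_solution N mu r \<longleftrightarrow>
     (\<forall>i<N. \<forall>j<N. i \<noteq> j \<longrightarrow> r i \<noteq> r j) \<and>
     (\<forall>t::real. \<forall>i<N.
        complex_of_real (mu i) * (- (r i * exp (\<i> * of_real t))) =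
        (\<Sum>j\<in>{..<N} - {i}.
           complex_of_real (mu i * mu j) *
           (r j * exp (\<i> * of_real t) - r i * exp (\<i> * of_real t)) /
           complex_of_real (cmod (r j * exp (\<i> * of_real t) - r i * exp (\<i> * of_real t)) ^ 3)))"

definition ngon_config :: "nat \<Rightarrow> complex \<Rightarrow> nat \<Rightarrow> complex" where
  "ngon_config n a k = (if k = 0 then 0 else a * cis (2 * pi * real (k - 1) / real n))"

definition mass_sys :: "real \<Rightarrow> real \<Rightarrow> nat \<Rightarrow> real" where
  "mass_sys m0 m1 k = (if k = 0 then m0 else m1)"

definition center_of_mass :: "nat \<Rightarrow> (nat \<Rightarrow> real) \<Rightarrow> (nat \<Rightarrow> complex) \<Rightarrow> complex" where
  "center_of_mass N mu r = (\<Sum>i<N. complex_of_real (mu i) * r i) / complex_of_real (\<Sum>i<N. mu i)"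

definition really_perverse_ngon :: "nat \<Rightarrow> complex \<Rightarrow> bool" where
  "really_perverse_ngon n a \<longleftrightarrow>
     (\<exists>m0 m1 m0' m1'. m0 > 0 \<and> m1 > 0 \<and> m0' > 0 \<and> m1' > 0 \<and>
        (m0, m1) \<noteq> (m0', m1') \<and>
        m0 + real n * m1 = m0' + real n * m1' \<and>
        center_of_mass (n + 1) (mass_sys m0 m1) (ngon_config n a) =
          center_of_mass (n + 1) (mass_sys m0' m1') (ngon_config n a) \<and>
        rel_eq_solution (n + 1) (mass_sys m0 m1) (ngon_config n a) \<and>
        rel_eq_solution (n + 1) (mass_sys m0' m1') (ngon_config n a))"

end

theory Submission
  imports Defs
begin

(* At t = 0 the equation of motion of a vertex of the n-gon reads
   m0 = |a|^3 - m1 S(n)/4, where S(n) = sum of csc(k pi/n) over 0 < k < n.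
   Two distinct mass systems with the same total mass m0 + n m1 can therefore only exist
   if S(n) = 4n.  Folding S(n) at pi/2 and splitting csc x = 1/x + (csc x - 1/x) gives
   S(n) ~ (2n/pi) (H_m + ln (4/pi)) with m = floor((n-1)/2); the error is controlled by
   midpoint and trapezoid comparisons for the convex function csc x - 1/x and its primitive
   ln (tan (x/2) / (x/2)).  Together with the Euler-Mascheroni bounds for H_m this yields
   S(n) < 4n for n <= 472 and S(n) > 4n for n >= 473. *)

section \<open>Taylor bounds for sine and cosine\<close>

lemma cos_lower_Taylor_2: "0 \<le> x \<Longrightarrow> 1 - x^2/2 \<le> cos (x::real)"
  using DERIV_nonneg_imp_nondecreasing[of 0 x "\<lambda>x. cos x - 1 + x^2/2"]
  by (force intro!: derivative_eq_intros sin_x_le_x)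

lemma sin_lower_Taylor_3: "0 \<le> x \<Longrightarrow> x - x^3/6 \<le> sin (x::real)"
  using DERIV_nonneg_imp_nondecreasing[of 0 x "\<lambda>x. sin x - x + x^3/6"]
  by (force intro!: derivative_eq_intros dest: cos_lower_Taylor_2)

lemma cos_upper_Taylor_4: "0 \<le> x \<Longrightarrow> cos (x::real) \<le> 1 - x^2/2 + x^4/24"
  using DERIV_nonneg_imp_nondecreasing[of 0 x "\<lambda>x. 1 - x^2/2 + x^4/24 - cos x"]
  by (force intro!: derivative_eq_intros dest: sin_lower_Taylor_3)

lemma sin_upper_Taylor_5: "0 \<le> x \<Longrightarrow> sin (x::real) \<le> x - x^3/6 + x^5/120"
  using DERIV_nonneg_imp_nondecreasing[of 0 x "\<lambda>x. x - x^3/6 + x^5/120 - sin x"]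
  by (force intro!: derivative_eq_intros dest: cos_upper_Taylor_4)

lemma cos_lower_Taylor_6: "0 \<le> x \<Longrightarrow> 1 - x^2/2 + x^4/24 - x^6/720 \<le> cos (x::real)"
  using DERIV_nonneg_imp_nondecreasing[of 0 x "\<lambda>x. cos x - (1 - x^2/2 + x^4/24 - x^6/720)"]
  by (force intro!: derivative_eq_intros dest: sin_upper_Taylor_5)

section \<open>Convex functions compared with their primitives\<close>

lemma midpoint_le_primitive_diff:
  fixes f F :: "real \<Rightarrow> real"
  assumes f: "convex_on I f" and I: "{x - t..x + t} \<subseteq> I" and t: "0 \<le> t"
    and F: "\<And>y. y \<in> I \<Longrightarrow> (F has_real_derivative f y) (at y)"
  shows "2 * t * f x \<le> F (x + t) - F (x - t)"
proof -
  have "F (x + 0) - F (x - 0) - 2 * 0 * f x \<le> F (x + t) - F (x - t) - 2 * t * f x"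
  proof (rule DERIV_nonneg_imp_nondecreasing[OF t])
    fix s assume s: "0 \<le> s" "s \<le> t"
    have "f ((1 - 1/2) *\<^sub>R (x - s) + (1/2) *\<^sub>R (x + s)) \<le> (1 - 1/2) * f (x - s) + (1/2) * f (x + s)"
      using s I by (intro convex_onD[OF f]) auto
    then have "0 \<le> f (x + s) + f (x - s) - 2 * f x"
      by (simp add: field_simps)
    moreover have "x + s \<in> I" "x - s \<in> I"
      using s I by auto
    then have "((\<lambda>s. F (x + s) - F (x - s) - 2 * s * f x) has_real_derivative
        f (x + s) + f (x - s) - 2 * f x) (at s)"
      by (auto intro!: derivative_eq_intros DERIV_chain2[OF F])
    ultimately show "\<exists>y. ((\<lambda>s. F (x + s) - F (x - s) - 2 * s * f x) has_real_derivative y) (at s) \<and> 0 \<le> y"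
      by blast
  qed
  then show ?thesis by simp
qed

lemma primitive_diff_le_trapezoid:
  fixes f F :: "real \<Rightarrow> real"
  assumes f: "convex_on I f" and I: "{a..b} \<subseteq> I" and ab: "a \<le> b"
    and F: "\<And>y. y \<in> I \<Longrightarrow> (F has_real_derivative f y) (at y)"
  shows "F b - F a \<le> (b - a) * (f a + f b) / 2"
proof (cases "a = b")
  case False
  define h where "h = b - a"
  have h: "0 < h" using ab False by (simp add: h_def)
  have b: "b = a + h" by (simp add: h_def)
  let ?D = "\<lambda>s. s * f a + s^2 / (2 * h) * (f b - f a) - (F (a + s) - F a)"
  have "?D 0 \<le> ?D h"
  proof (rule DERIV_nonneg_imp_nondecreasing[of 0 h ?D])
    fix s assume s: "0 \<le> s" "s \<le> h"
    let ?D' = "f a + s / h * (f b - f a) - f (a + s)"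
    have "f ((1 - s/h) *\<^sub>R a + (s/h) *\<^sub>R b) \<le> (1 - s/h) * f a + (s/h) * f b"
      using s h I ab by (intro convex_onD[OF f]) auto
    moreover have "(1 - s/h) *\<^sub>R a + (s/h) *\<^sub>R (a + h) = a + s"
      using h by (simp add: field_simps)
    ultimately have "0 \<le> ?D'"
      unfolding b using h by (simp add: algebra_simps)
    moreover have "a + s \<in> I"
      using s I b by auto
    then have "(?D has_real_derivative ?D') (at s)"
      using h by (auto intro!: derivative_eq_intros DERIV_chain2[OF F])
    ultimately show "\<exists>y. (?D has_real_derivative y) (at s) \<and> 0 \<le> y" by blast
  qed (use h in simp)
  moreover have "?D 0 = 0" by simp
  moreover have "?D h = h * (f a + f b) / 2 - (F b - F a)"
    using h by (simp add: b power2_eq_square field_simps)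
  ultimately show ?thesis unfolding h_def[symmetric] by linarith
qed simp

lemma mono_primitive_diff_bounds:
  fixes f F :: "real \<Rightarrow> real"
  assumes f: "mono_on {a..b} f" and ab: "a \<le> b"
    and F: "\<And>y. y \<in> {a..b} \<Longrightarrow> (F has_real_derivative f y) (at y)"
  shows "(b - a) * f a \<le> F b - F a" and "F b - F a \<le> (b - a) * f b"
proof -
  have "(b - a) * f a \<le> F b - F a \<and> F b - F a \<le> (b - a) * f b"
  proof (cases "a = b")
    case False
    then obtain z where z: "a < z" "z < b" "F b - F a = (b - a) * f z"
      using MVT2[of a b F f] ab F by force
    have "f a \<le> f z" "f z \<le> f b"
      using z by (auto intro!: mono_onD[OF f])
    then show ?thesis using z ab by (simp add: mult_left_mono)
  qed simp
  then show "(b - a) * f a \<le> F b - F a" and "F b - F a \<le> (b - a) * f b" by auto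
qed

lemma midpoint_sum_le_primitive_diff:
  fixes f F :: "real \<Rightarrow> real"
  assumes f: "convex_on I f" and I: "{d/2..(real m + 1/2) * d} \<subseteq> I" and d: "0 < d"
    and F: "\<And>y. y \<in> I \<Longrightarrow> (F has_real_derivative f y) (at y)"
  shows "d * (\<Sum>k=1..m. f (real k * d)) \<le> F ((real m + 1/2) * d) - F (d/2)"
  using I
proof (induction m)
  case (Suc m)
  have "0 \<le> d * real m" using d by simp
  then have "{d/2..(real m + 1/2) * d} \<subseteq> {d/2..(real (Suc m) + 1/2) * d}"
    "{real (Suc m) * d - d/2..real (Suc m) * d + d/2} \<subseteq> {d/2..(real (Suc m) + 1/2) * d}"
    using d by (simp_all add: algebra_simps)
  then have "{d/2..(real m + 1/2) * d} \<subseteq> I" "{real (Suc m) * d - d/2..real (Suc m) * d + d/2} \<subseteq> I"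
    using Suc.prems by blast+
  from Suc.IH[OF this(1)] midpoint_le_primitive_diff[OF f this(2) _ F] d
  show ?case by (simp add: algebra_simps)
qed simp

lemma primitive_diff_le_trapezoid_sum:
  fixes f F :: "real \<Rightarrow> real"
  assumes f: "convex_on I f" and I: "{d..real m * d} \<subseteq> I" and d: "0 < d" and m: "1 \<le> m"
    and F: "\<And>y. y \<in> I \<Longrightarrow> (F has_real_derivative f y) (at y)"
  shows "F (real m * d) - F d \<le> d * ((\<Sum>k=1..m. f (real k * d)) - (f d + f (real m * d)) / 2)"
  using m I
proof (induction m rule: nat_induct_at_least)
  case (Suc m)
  have "d \<le> d * real m" using Suc d by simp
  then have "{d..real m * d} \<subseteq> {d..real (Suc m) * d}" "{real m * d..real (Suc m) * d} \<subseteq> {d..real (Suc m) * d}"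
    using d by (simp_all add: algebra_simps)
  then have "{d..real m * d} \<subseteq> I" "{real m * d..real (Suc m) * d} \<subseteq> I"
    using Suc.prems by blast+
  from Suc.IH[OF this(1)] primitive_diff_le_trapezoid[OF f this(2) _ F] d
  show ?case by (simp add: field_simps)
qed simp

section \<open>The excess of the cosecant over the reciprocal\<close>

definition csc_excess :: "real \<Rightarrow> real" where
  "csc_excess x = 1 / sin x - 1 / x"

definition csc_excess_primitive :: "real \<Rightarrow> real" where
  "csc_excess_primitive x = ln (tan (x/2)) - ln (x/2)"

lemma two_sin_cube_le:
  fixes x :: real assumes "0 < x" "x < pi"
  shows "2 * (sin x)^3 \<le> x^3 * (1 + (cos x)^2)"
proof (cases "x \<ge> 13/10")
  case True
  have "(sin x)^3 \<le> 1"
    using assms by (simp add: power_le_one sin_ge_zero)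
  moreover have "(13/10::real)^3 \<le> x^3"
    using True by (intro power_mono) auto
  moreover have "x^3 \<le> x^3 * (1 + (cos x)^2)"
    using assms by simp
  ultimately show ?thesis by (simp add: power3_eq_cube)
next
  case False
  define s where "s = x - x^3/6 + x^5/120"
  define c where "c = 1 - x^2/2 + x^4/24 - x^6/720"
  have x2: "x^2 \<le> 2"
    using False assms power_mono[of x "13/10" 2] by (simp add: power2_eq_square)
  have "0 \<le> c"
  proof -
    have "x^6 \<le> x^4 * 2"
      using x2 mult_left_mono[of "x^2" 2 "x^4"] by (simp add: power_add[symmetric])
    moreover have "0 \<le> x^4" by simp
    ultimately show ?thesis using x2 unfolding c_def by linarith
  qed
  have "2 * s^3 \<le> x^3 * (1 + c^2)"
  proof -
    have "x^3 * (1 + c^2) - 2 * s^3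
        = x^7 * ((7/60 - x^2/54) + x^4 * (19/14400 - x^2/21600) + x^8/1296000)"
      by (simp add: s_def c_def field_simps eval_nat_numeral)
    moreover have "0 \<le> x^7 * ((7/60 - x^2/54) + x^4 * (19/14400 - x^2/21600) + x^8/1296000)"
      using x2 assms by (intro mult_nonneg_nonneg add_nonneg_nonneg) auto
    ultimately show ?thesis by linarith
  qed
  moreover have "(sin x)^3 \<le> s^3"
    using assms sin_upper_Taylor_5[of x] by (auto simp: s_def intro!: power_mono sin_ge_zero)
  moreover have "c^2 \<le> (cos x)^2"
    using \<open>0 \<le> c\<close> cos_lower_Taylor_6[of x] assms by (auto simp: c_def intro!: power_mono)
  then have "x^3 * (1 + c^2) \<le> x^3 * (1 + (cos x)^2)"
    using assms by (intro mult_left_mono) auto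
  ultimately show ?thesis by linarith
qed

lemma csc_excess_has_derivative:
  assumes "0 < x" "x < pi"
  shows "(csc_excess has_real_derivative 1/x^2 - cos x / (sin x)^2) (at x)"
  using assms sin_gt_zero[OF assms] unfolding csc_excess_def [abs_def]
  by (auto intro!: derivative_eq_intros simp: field_simps power2_eq_square)

lemma csc_excess_derivative_has_derivative:
  assumes "0 < x" "x < pi"
  shows "((\<lambda>x. 1/x^2 - cos x / (sin x)^2) has_real_derivative
           (1 + (cos x)^2) / (sin x)^3 - 2 / x^3) (at x)"
proof -
  have s: "sin x \<noteq> 0" using sin_gt_zero[OF assms] by simp
  have "((\<lambda>x. 1/x^2 - cos x / (sin x)^2) has_real_derivative
      - (2 * x) / (x^2)^2 - ((- sin x) * (sin x)^2 - cos x * (2 * sin x * cos x)) / ((sin x)^2)^2) (at x)"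
    using s assms by (auto intro!: derivative_eq_intros)
  moreover have "- (2 * x) / (x^2)^2 - ((- sin x) * (sin x)^2 - cos x * (2 * sin x * cos x)) / ((sin x)^2)^2
      = (1 + (cos x)^2) / (sin x)^3 - 2 / x^3"
  proof -
    have "((- sin x) * (sin x)^2 - cos x * (2 * sin x * cos x)) / ((sin x)^2)^2
        = - ((sin x)^2 + 2 * (cos x)^2) / (sin x)^3"
      using s by (simp add: field_simps eval_nat_numeral)
    moreover have "(sin x)^2 + 2 * (cos x)^2 = 1 + (cos x)^2"
      using sin_cos_squared_add[of x] by linarith
    moreover have "- (2 * x) / (x^2)^2 = - 2 / x^3"
      using assms by (simp add: field_simps eval_nat_numeral)
    ultimately show ?thesis using s by (simp add: field_simps)
  qed
  ultimately show ?thesis by simp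
qed

lemma convex_on_csc_excess: "convex_on {0<..<pi} csc_excess"
proof (rule f''_ge0_imp_convex)
  fix x assume x: "x \<in> {0<..<pi}"
  then show "(csc_excess has_real_derivative 1/x^2 - cos x / (sin x)^2) (at x)"
    and "((\<lambda>x. 1/x^2 - cos x / (sin x)^2) has_real_derivative
           (1 + (cos x)^2) / (sin x)^3 - 2 / x^3) (at x)"
    by (auto intro: csc_excess_has_derivative csc_excess_derivative_has_derivative)
  have "0 < sin x" using x sin_gt_zero by auto
  with x two_sin_cube_le[of x] show "0 \<le> (1 + (cos x)^2) / (sin x)^3 - 2 / x^3"
    by (simp add: field_simps)
qed simp

lemma sq_mult_cos_le_sin_sq:
  assumes "0 < x" "x < pi"
  shows "x^2 * cos x \<le> (sin x)^2"
proof (cases "x \<le> pi/2")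
  case False
  then have "cos x \<le> 0"
    using assms cos_ge_zero[of "pi - x"] by simp
  then have "x^2 * cos x \<le> 0"
    by (simp add: mult_nonneg_nonpos)
  then show ?thesis
    using zero_le_power2[of "sin x"] by linarith
next
  case True
  have x2: "x^2 \<le> 4"
    using True pi_less_4 assms power_mono[of x 2 2] by simp
  then have "0 \<le> x - x^3/6"
    using assms mult_left_mono[of "x^2" 6 x] by (simp add: power3_eq_cube power2_eq_square)
  have "x^2 * cos x \<le> x^2 * (1 - x^2/2 + x^4/24)"
    using cos_upper_Taylor_4[of x] assms by (intro mult_left_mono) auto
  also have "\<dots> \<le> (x - x^3/6)^2"
  proof -
    have "(x - x^3/6)^2 - x^2 * (1 - x^2/2 + x^4/24) = x^4 * (1/6 - x^2/72)"
      by (simp add: field_simps eval_nat_numeral)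
    moreover have "0 \<le> x^4 * (1/6 - x^2/72)" using x2 by simp
    ultimately show ?thesis by linarith
  qed
  also have "\<dots> \<le> (sin x)^2"
    using \<open>0 \<le> x - x^3/6\<close> sin_lower_Taylor_3[of x] assms by (intro power_mono) auto
  finally show ?thesis .
qed

lemma mono_on_csc_excess: "mono_on {0<..<pi} csc_excess"
proof (intro mono_onI)
  fix a b :: real assume ab: "a \<in> {0<..<pi}" "b \<in> {0<..<pi}" "a \<le> b"
  show "csc_excess a \<le> csc_excess b"
  proof (rule DERIV_nonneg_imp_nondecreasing[OF ab(3)])
    fix x assume x: "a \<le> x" "x \<le> b"
    then have "0 < x" "x < pi" "0 < sin x"
      using ab sin_gt_zero[of x] by auto
    then have "0 \<le> 1/x^2 - cos x / (sin x)^2"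
      using sq_mult_cos_le_sin_sq[of x] by (simp add: field_simps)
    with \<open>0 < x\<close> \<open>x < pi\<close> show "\<exists>y. (csc_excess has_real_derivative y) (at x) \<and> 0 \<le> y"
      using csc_excess_has_derivative by blast
  qed
qed

lemma csc_excess_nonneg:
  assumes "0 < x" "x < pi"
  shows "0 \<le> csc_excess x"
  using assms sin_x_le_x[of x] sin_gt_zero[OF assms]
  by (simp add: csc_excess_def field_simps)

lemma csc_excess_pi_half: "csc_excess (pi/2) = 1 - 2/pi"
  by (simp add: csc_excess_def)

lemma csc_excess_pi_half_minus_ge:
  assumes "0 \<le> r" "r < pi/2"
  shows "1 - 2 / (pi - 2*r) \<le> csc_excess (pi/2 - r)"
proof -
  have "0 < cos r" using assms by (intro cos_gt_zero_pi) auto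
  then show ?thesis
    by (simp add: csc_excess_def sin_cos_eq field_simps)
qed

lemma csc_excess_primitive_has_derivative:
  assumes "x \<in> {0<..<pi}"
  shows "(csc_excess_primitive has_real_derivative csc_excess x) (at x)"
proof -
  from assms have "0 < x" "x < pi" by auto
  then have c: "0 < cos (x/2)" and s: "0 < sin (x/2)"
    by (auto intro: cos_gt_zero_pi sin_gt_zero)
  have "(csc_excess_primitive has_real_derivative
          inverse ((cos (x/2))^2) * (1/2) / tan (x/2) - (1/2) / (x/2)) (at x)"
    unfolding csc_excess_primitive_def [abs_def] using c \<open>0 < x\<close> \<open>x < pi\<close> tan_gt_zero[of "x/2"]
    by (auto intro!: derivative_eq_intros)
  moreover have "sin x = 2 * sin (x/2) * cos (x/2)"
    using sin_double[of "x/2"] by simp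
  then have "inverse ((cos (x/2))^2) * (1/2) / tan (x/2) - (1/2) / (x/2) = csc_excess x"
    using c s \<open>0 < x\<close> by (simp add: csc_excess_def tan_def field_simps power2_eq_square)
  ultimately show ?thesis by simp
qed

lemma csc_excess_primitive_pi_half: "csc_excess_primitive (pi/2) = ln (4/pi)"
  by (simp add: csc_excess_primitive_def tan_45 ln_div)

lemma tan_ge_self:
  assumes "0 \<le> x" "x < pi/2"
  shows "x \<le> tan x"
proof -
  have "tan 0 - 0 \<le> tan x - x"
  proof (rule DERIV_nonneg_imp_nondecreasing[OF assms(1)])
    fix s assume s: "0 \<le> s" "s \<le> x"
    have c: "0 < cos s" using s assms by (intro cos_gt_zero_pi) auto
    have "((\<lambda>s. tan s - s) has_real_derivative inverse ((cos s)^2) - 1) (at s)"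
      using c by (auto intro!: derivative_eq_intros)
    moreover have "(cos s)^2 \<le> 1"
      by (simp add: cos_squared_eq)
    then have "1 \<le> inverse ((cos s)^2)"
      using c by (simp add: one_le_inverse_iff)
    ultimately show "\<exists>y. ((\<lambda>s. tan s - s) has_real_derivative y) (at s) \<and> 0 \<le> y" by auto
  qed
  then show ?thesis by simp
qed

lemma csc_excess_primitive_nonneg:
  assumes "0 < x" "x < pi"
  shows "0 \<le> csc_excess_primitive x"
  using assms tan_ge_self[of "x/2"] by (simp add: csc_excess_primitive_def)

lemma csc_excess_primitive_le:
  assumes "0 < y" "y \<le> 1"
  shows "csc_excess_primitive y \<le> (y^2/8) / (1 - y^2/8)"
proof -
  define u where "u = y/2"
  have u: "0 < u" "u \<le> 1/2" using assms by (auto simp: u_def)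
  then have "u^2 \<le> 1/4" using power_mono[of u "1/2" 2] by (simp add: power2_eq_square)
  then have cpos: "0 < 1 - u^2/2" by simp
  have "tan u = sin u / cos u" by (simp add: tan_def)
  also have "\<dots> \<le> u / (1 - u^2/2)"
    using sin_x_le_x[of u] cos_lower_Taylor_2[of u] sin_gt_zero[of u] cpos u pi_gt3
    by (intro frac_le) auto
  finally have tan_le: "tan u \<le> u / (1 - u^2/2)" .
  have "0 < tan u" using u pi_gt3 by (intro tan_gt_zero) auto
  then have "csc_excess_primitive y = ln (tan u / u)"
    using u by (simp add: csc_excess_primitive_def u_def[symmetric] ln_div)
  also have "\<dots> \<le> tan u / u - 1"
    using \<open>0 < tan u\<close> u by (intro ln_le_minus_one) auto
  also have "\<dots> \<le> 1 / (1 - u^2/2) - 1"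
    using tan_le u cpos by (simp add: field_simps)
  also have "\<dots> = (y^2/8) / (1 - y^2/8)"
    using cpos by (simp add: u_def field_simps power2_eq_square)
  finally show ?thesis .
qed

section \<open>The cosecant sum\<close>

definition csc_sum :: "nat \<Rightarrow> real" where
  "csc_sum n = (\<Sum>k\<in>{1..<n}. 1 / sin (real k * pi / real n))"

lemma sum_csc_reflect:
  assumes "m < n"
  shows "(\<Sum>k\<in>{m+1..<n}. 1 / sin (real k * pi / real n)) = (\<Sum>k=1..n-m-1. 1 / sin (real k * pi / real n))"
proof -
  have "(\<Sum>k\<in>{m+1..<n}. 1 / sin (real k * pi / real n))
      = (\<Sum>k=1..n-m-1. 1 / sin (real (n - k) * pi / real n))"
    by (rule sum.reindex_bij_witness[where i="\<lambda>k. n - k" and j="\<lambda>k. n - k"]) (use assms in auto)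
  also have "\<dots> = (\<Sum>k=1..n-m-1. 1 / sin (real k * pi / real n))"
  proof (intro sum.cong refl)
    fix k assume "k \<in> {1..n-m-1}"
    then have "k \<le> n" by auto
    then have "real (n - k) * pi / real n = pi - real k * pi / real n"
      using assms by (simp add: field_simps)
    then show "1 / sin (real (n - k) * pi / real n) = 1 / sin (real k * pi / real n)" by simp
  qed
  finally show ?thesis .
qed

lemma csc_sum_odd:
  assumes "n = 2*m + 1"
  shows "csc_sum n = 2 * (\<Sum>k=1..m. 1 / sin (real k * (pi / real n)))"
proof -
  have split: "{1..<n} = {1..m} \<union> {m+1..<n}" using assms by auto
  have "csc_sum n = (\<Sum>k=1..m. 1 / sin (real k * pi / real n)) + (\<Sum>k\<in>{m+1..<n}. 1 / sin (real k * pi / real n))"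
    unfolding csc_sum_def split by (rule sum.union_disjoint) auto
  also have "(\<Sum>k\<in>{m+1..<n}. 1 / sin (real k * pi / real n)) = (\<Sum>k=1..m. 1 / sin (real k * pi / real n))"
    using sum_csc_reflect[of m n] assms by simp
  finally show ?thesis by simp
qed

lemma csc_sum_even:
  assumes "n = 2*m + 2"
  shows "csc_sum n = 2 * (\<Sum>k=1..m. 1 / sin (real k * (pi / real n))) + 1"
proof -
  have split: "{1..<n} = {1..m} \<union> insert (m+1) {m+2..<n}" using assms by auto
  have "csc_sum n = (\<Sum>k=1..m. 1 / sin (real k * pi / real n)) + (1 / sin (real (m+1) * pi / real n)
      + (\<Sum>k\<in>{m+2..<n}. 1 / sin (real k * pi / real n)))"
    unfolding csc_sum_def split by (subst sum.union_disjoint) auto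
  also have "(\<Sum>k\<in>{m+2..<n}. 1 / sin (real k * pi / real n)) = (\<Sum>k=1..m. 1 / sin (real k * pi / real n))"
    using sum_csc_reflect[of "m+1" n] assms by simp
  also have "real (m+1) * pi / real n = pi/2" using assms by (simp add: field_simps)
  finally show ?thesis by simp
qed

lemma sum_csc_eq_harm_plus_excess:
  "(\<Sum>k=1..m. 1 / sin (real k * d)) = harm m / d + (\<Sum>k=1..m. csc_excess (real k * d))"
proof -
  have "(\<Sum>k=1..m. 1 / sin (real k * d)) = (\<Sum>k=1..m. inverse (real k) / d + csc_excess (real k * d))"
    by (intro sum.cong refl) (simp add: csc_excess_def field_simps)
  then show ?thesis
    by (simp add: harm_def sum.distrib sum_divide_distrib)
qed

lemma csc_excess_sum_upper_odd:
  assumes d: "0 < d" and md: "(real m + 1/2) * d = pi/2"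
  shows "d * (\<Sum>k=1..m. csc_excess (real k * d)) \<le> ln (4/pi)"
proof -
  have "0 \<le> real m * d" using d by simp
  moreover have "(real m + 1/2) * d = real m * d + d/2" by (simp add: algebra_simps)
  ultimately have "d/2 < pi" using md pi_gt_zero by linarith
  have I: "{d/2..(real m + 1/2) * d} \<subseteq> {0<..<pi}" using d md by auto
  have "d * (\<Sum>k=1..m. csc_excess (real k * d))
      \<le> csc_excess_primitive (pi/2) - csc_excess_primitive (d/2)"
    using midpoint_sum_le_primitive_diff[OF convex_on_csc_excess I d csc_excess_primitive_has_derivative]
    unfolding md .
  then show ?thesis
    using csc_excess_primitive_nonneg[of "d/2"] \<open>d/2 < pi\<close> d
    by (simp add: csc_excess_primitive_pi_half)
qed

lemma csc_excess_sum_upper_even: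
  assumes d: "0 < d" and md: "(real m + 1) * d = pi/2"
  shows "d * (\<Sum>k=1..m. csc_excess (real k * d)) \<le> ln (4/pi) - (d/2) * (1 - 2 / (pi - d))"
proof -
  have md': "(real m + 1/2) * d = pi/2 - d/2"
    using md by (simp add: field_simps)
  have "0 \<le> real m * d" using d by simp
  moreover have "(real m + 1) * d = real m * d + d" by (simp add: algebra_simps)
  ultimately have "d \<le> pi/2" using md by linarith
  have I: "{d/2..(real m + 1/2) * d} \<subseteq> {0<..<pi}" using d md' by auto
  have "d * (\<Sum>k=1..m. csc_excess (real k * d))
      \<le> csc_excess_primitive (pi/2 - d/2) - csc_excess_primitive (d/2)"
    using midpoint_sum_le_primitive_diff[OF convex_on_csc_excess I d csc_excess_primitive_has_derivative]
    unfolding md' .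
  moreover have "0 \<le> csc_excess_primitive (d/2)"
    using d \<open>d \<le> pi/2\<close> by (intro csc_excess_primitive_nonneg) auto
  moreover have "(d/2) * csc_excess (pi/2 - d/2) \<le> ln (4/pi) - csc_excess_primitive (pi/2 - d/2)"
    using mono_primitive_diff_bounds(1)[of "pi/2 - d/2" "pi/2" csc_excess csc_excess_primitive] d \<open>d \<le> pi/2\<close>
      mono_on_subset[OF mono_on_csc_excess] csc_excess_primitive_has_derivative
    by (simp add: subset_eq csc_excess_primitive_pi_half)
  moreover have "(d/2) * (1 - 2 / (pi - d)) \<le> (d/2) * csc_excess (pi/2 - d/2)"
    using csc_excess_pi_half_minus_ge[of "d/2"] d \<open>d \<le> pi/2\<close> by (intro mult_left_mono) auto
  ultimately show ?thesis by linarith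
qed

lemma csc_excess_sum_lower_odd:
  assumes d: "0 < d" and m: "1 \<le> m" and md: "(real m + 1/2) * d = pi/2"
  shows "ln (4/pi) - csc_excess_primitive d - (d/2) * (1 - 2/pi) + (d/2) * (1 - 2 / (pi - d))
    \<le> d * (\<Sum>k=1..m. csc_excess (real k * d))"
proof -
  have "d \<le> real m * d" using d m by simp
  moreover have "(real m + 1/2) * d = real m * d + d/2" by (simp add: algebra_simps)
  ultimately have md': "real m * d = pi/2 - d/2" and "d < pi/2"
    using md d by linarith+
  then have I: "{d..real m * d} \<subseteq> {0<..<pi}" using d by auto
  have "csc_excess_primitive (pi/2 - d/2) - csc_excess_primitive d
      \<le> d * (\<Sum>k=1..m. csc_excess (real k * d)) - (d/2) * csc_excess d - (d/2) * csc_excess (pi/2 - d/2)"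
    using primitive_diff_le_trapezoid_sum[OF convex_on_csc_excess I d m csc_excess_primitive_has_derivative]
    unfolding md' by (simp add: algebra_simps add_divide_distrib)
  moreover have "ln (4/pi) - csc_excess_primitive (pi/2 - d/2) \<le> (d/2) * (1 - 2/pi)"
    using mono_primitive_diff_bounds(2)[of "pi/2 - d/2" "pi/2" csc_excess csc_excess_primitive] d \<open>d < pi/2\<close>
      mono_on_subset[OF mono_on_csc_excess] csc_excess_primitive_has_derivative
    by (simp add: subset_eq csc_excess_primitive_pi_half csc_excess_pi_half)
  moreover have "0 \<le> (d/2) * csc_excess d"
    using d \<open>d < pi/2\<close> csc_excess_nonneg[of d] by simp
  moreover have "(d/2) * (1 - 2 / (pi - d)) \<le> (d/2) * csc_excess (pi/2 - d/2)"
    using csc_excess_pi_half_minus_ge[of "d/2"] d \<open>d < pi/2\<close> by (intro mult_left_mono) auto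
  ultimately show ?thesis by linarith
qed

lemma csc_excess_sum_lower_even:
  assumes d: "0 < d" and m: "1 \<le> m" and md: "(real m + 1) * d = pi/2"
  shows "ln (4/pi) - csc_excess_primitive d - d * (1 - 2/pi) + (d/2) * (1 - 2 / (pi - 2*d))
    \<le> d * (\<Sum>k=1..m. csc_excess (real k * d))"
proof -
  have "d \<le> real m * d" using d m by simp
  moreover have "(real m + 1) * d = real m * d + d" by (simp add: algebra_simps)
  ultimately have md': "real m * d = pi/2 - d" and "d \<le> pi/4"
    using md d by linarith+
  then have I: "{d..real m * d} \<subseteq> {0<..<pi}" using d by auto
  have "csc_excess_primitive (pi/2 - d) - csc_excess_primitive d
      \<le> d * (\<Sum>k=1..m. csc_excess (real k * d)) - (d/2) * csc_excess d - (d/2) * csc_excess (pi/2 - d)"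
    using primitive_diff_le_trapezoid_sum[OF convex_on_csc_excess I d m csc_excess_primitive_has_derivative]
    unfolding md' by (simp add: algebra_simps add_divide_distrib)
  moreover have "ln (4/pi) - csc_excess_primitive (pi/2 - d) \<le> d * (1 - 2/pi)"
    using mono_primitive_diff_bounds(2)[of "pi/2 - d" "pi/2" csc_excess csc_excess_primitive] d \<open>d \<le> pi/4\<close>
      mono_on_subset[OF mono_on_csc_excess] csc_excess_primitive_has_derivative
    by (simp add: subset_eq csc_excess_primitive_pi_half csc_excess_pi_half)
  moreover have "0 \<le> (d/2) * csc_excess d"
    using d \<open>d \<le> pi/4\<close> csc_excess_nonneg[of d] by simp
  moreover have "(d/2) * (1 - 2 / (pi - 2*d)) \<le> (d/2) * csc_excess (pi/2 - d)"
    using csc_excess_pi_half_minus_ge[of d] d \<open>d \<le> pi/4\<close> by (intro mult_left_mono) auto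
  ultimately show ?thesis by linarith
qed

lemma csc_sum_odd_eq:
  assumes n: "n = 2*m + 1" and d: "d = pi / real n"
  shows "csc_sum n = 2 / d * (harm m + d * (\<Sum>k=1..m. csc_excess (real k * d)))"
proof -
  have "0 < d" using n d by simp
  then show ?thesis
    unfolding csc_sum_odd[OF n, folded d] sum_csc_eq_harm_plus_excess by (simp add: field_simps)
qed

lemma csc_sum_even_eq:
  assumes n: "n = 2*m + 2" and d: "d = pi / real n"
  shows "csc_sum n = 2 / d * (harm m + d * (\<Sum>k=1..m. csc_excess (real k * d))) + 1"
proof -
  have "0 < d" using n d by simp
  then show ?thesis
    unfolding csc_sum_even[OF n, folded d] sum_csc_eq_harm_plus_excess by (simp add: field_simps)
qed


lemma csc_sum_odd_le:
  assumes n: "n = 2*m + 1"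
  shows "csc_sum n \<le> 2 * real n / pi * (harm m + ln (4/pi))"
proof -
  define d where "d = pi / real n"
  have d: "0 < d" and md: "(real m + 1/2) * d = pi/2"
    using n by (simp_all add: d_def field_simps)
  have "csc_sum n = 2 / d * (harm m + d * (\<Sum>k=1..m. csc_excess (real k * d)))"
    using n d_def by (rule csc_sum_odd_eq)
  also have "\<dots> \<le> 2 / d * (harm m + ln (4/pi))"
    using csc_excess_sum_upper_odd[OF d md] d by (intro mult_left_mono) auto
  also have "2 / d = 2 * real n / pi"
    by (simp add: d_def)
  finally show ?thesis .
qed

lemma csc_sum_even_le:
  assumes n: "n = 2*m + 2"
  shows "csc_sum n \<le> 2 * real n / pi * (harm m + ln (4/pi) + 1 / (real n - 1))"
proof -
  define d where "d = pi / real n"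
  have d: "0 < d" and md: "(real m + 1) * d = pi/2" and pi_eq: "pi = real n * d"
    using n by (simp_all add: d_def field_simps)
  have "csc_sum n = 2 / d * (harm m + d * (\<Sum>k=1..m. csc_excess (real k * d))) + 1"
    using n d_def by (rule csc_sum_even_eq)
  also have "\<dots> \<le> 2 / d * (harm m + (ln (4/pi) - (d/2) * (1 - 2 / (pi - d)))) + 1"
    using csc_excess_sum_upper_even[OF d md] d by (intro add_right_mono mult_left_mono) auto
  also have "\<dots> = 2 * real n / pi * (harm m + ln (4/pi) + 1 / (real n - 1))"
  proof -
    have "2 / d * (h + (L - (d/2) * (1 - 2 / (pi - d)))) + 1 = 2 * real n / pi * (h + L + 1 / (real n - 1))"
      if "1 < real n" for h L
      using that d unfolding pi_eq by (simp add: field_simps)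
    then show ?thesis using n by simp
  qed
  finally show ?thesis .
qed

lemma csc_sum_odd_ge:
  assumes n: "n = 2*m + 1" and m: "1 \<le> m"
  shows "2 * real n / pi * (harm m + ln (4/pi) - csc_excess_primitive (pi / real n) + 1 / real n - 1 / (real n - 1))
    \<le> csc_sum n"
proof -
  define d where "d = pi / real n"
  have d: "0 < d" and md: "(real m + 1/2) * d = pi/2" and pi_eq: "pi = real n * d"
    using n by (simp_all add: d_def field_simps)
  have "2 * real n / pi * (harm m + ln (4/pi) - csc_excess_primitive d + 1 / real n - 1 / (real n - 1))
      = 2 / d * (harm m + (ln (4/pi) - csc_excess_primitive d - (d/2) * (1 - 2/pi) + (d/2) * (1 - 2 / (pi - d))))"
  proof -
    have "2 * real n / pi * (h + L - G + 1 / real n - 1 / (real n - 1))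
        = 2 / d * (h + (L - G - (d/2) * (1 - 2/pi) + (d/2) * (1 - 2 / (pi - d))))"
      if "1 < real n" for h L G
      using that d unfolding pi_eq by (simp add: field_simps)
    then show ?thesis using n m by simp
  qed
  also have "\<dots> \<le> 2 / d * (harm m + d * (\<Sum>k=1..m. csc_excess (real k * d)))"
    using csc_excess_sum_lower_odd[OF d m md] d by (intro mult_left_mono) auto
  also have "\<dots> = csc_sum n"
    using n d_def by (rule csc_sum_odd_eq[symmetric])
  finally show ?thesis by (simp add: d_def)
qed

lemma csc_sum_even_ge:
  assumes n: "n = 2*m + 2" and m: "1 \<le> m"
  shows "2 * real n / pi * (harm m + ln (4/pi) - csc_excess_primitive (pi / real n) + 2 / real n - 1 / (real n - 2))
    \<le> csc_sum n"
proof -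
  define d where "d = pi / real n"
  have d: "0 < d" and md: "(real m + 1) * d = pi/2" and pi_eq: "pi = real n * d"
    using n by (simp_all add: d_def field_simps)
  have "2 * real n / pi * (harm m + ln (4/pi) - csc_excess_primitive d + 2 / real n - 1 / (real n - 2))
      = 2 / d * (harm m + (ln (4/pi) - csc_excess_primitive d - d * (1 - 2/pi) + (d/2) * (1 - 2 / (pi - 2*d)))) + 1"
  proof -
    have "2 * real n / pi * (h + L - G + 2 / real n - 1 / (real n - 2))
        = 2 / d * (h + (L - G - d * (1 - 2/pi) + (d/2) * (1 - 2 / (pi - 2*d)))) + 1"
      if "2 < real n" for h L G
      using that d unfolding pi_eq by (simp add: field_simps)
    then show ?thesis using n m by simp
  qed
  also have "\<dots> \<le> 2 / d * (harm m + d * (\<Sum>k=1..m. csc_excess (real k * d))) + 1"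
    using csc_excess_sum_lower_even[OF d m md] d by (intro add_right_mono mult_left_mono) auto
  also have "\<dots> = csc_sum n"
    using n d_def by (rule csc_sum_even_eq[symmetric])
  finally show ?thesis by (simp add: d_def)
qed

lemma ln_bounds_from_series:
  fixes x lo hi :: real and n :: nat
  assumes "1 < x"
    and "lo \<le> (\<Sum>k<n. 2 * ((x - 1) / (x + 1))^(2*k+1) / of_nat (2*k+1))"
    and "(\<Sum>k<n. 2 * ((x - 1) / (x + 1))^(2*k+1) / of_nat (2*k+1))
          + 2 * (((x - 1) / (x + 1))^(2*n+1) / (1 - ((x - 1) / (x + 1))^2) / of_nat (2*n+1)) \<le> hi"
  shows "lo \<le> ln x" and "ln x \<le> hi"
  using ln_approx_bounds[OF assms(1), of n] assms(2,3) by auto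

lemma ln_2_bounds: "69314717/100000000 \<le> ln (2::real)" "ln (2::real) \<le> 69314719/100000000"
  by (rule ln_bounds_from_series(1)[where n=8 and hi=1]; simp add: lessThan_nat_numeral power_divide)
     (rule ln_bounds_from_series(2)[where n=8 and lo=0]; simp add: lessThan_nat_numeral power_divide)

lemma pi_bounds: "314159/100000 \<le> pi" "pi \<le> 31416/10000"
  using pi_approx by simp_all

lemma ln_4_div_pi_bounds: "24156/100000 \<le> ln (4/pi)" "ln (4/pi) \<le> 24157/100000"
proof -
  have "24156/100000 \<le> ln (5000/3927::real)"
    by (rule ln_bounds_from_series(1)[where n=4 and hi=1]; simp add: lessThan_nat_numeral power_divide)
  moreover have "ln (5000/3927::real) \<le> ln (4/pi)"
    using pi_bounds by (intro ln_mono) (simp_all add: field_simps)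
  ultimately show "24156/100000 \<le> ln (4/pi)" by linarith
  have "ln (400000/314159::real) \<le> 24157/100000"
    by (rule ln_bounds_from_series(2)[where n=4 and lo=0]; simp add: lessThan_nat_numeral power_divide)
  moreover have "ln (4/pi) \<le> ln (400000/314159::real)"
    using pi_bounds by (intro ln_mono) (simp_all add: field_simps)
  ultimately show "ln (4/pi) \<le> 24157/100000" by linarith
qed

lemma euler_mascheroni_bounds_harm_63:
  "harm 63 - 6 * ln 2 + 1/128 \<le> (euler_mascheroni :: real)"
  "(euler_mascheroni :: real) \<le> harm 63 - 6 * ln 2 + 1/126"
proof -
  have "ln (real (Suc 63)) = 6 * ln (2::real)"
    using ln_realpow[of 2 6] by simp
  then show "harm 63 - 6 * ln 2 + 1/128 \<le> (euler_mascheroni :: real)"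
    "(euler_mascheroni :: real) \<le> harm 63 - 6 * ln 2 + 1/126"
    using euler_mascheroni_bounds[of 63] by (simp_all add: inverse_eq_divide)
qed

lemma harm_63_bounds: "47282659/10000000 \<le> (harm 63 :: real)" "(harm 63 :: real) \<le> 47282660/10000000"
  by (simp_all add: harm_expand)

lemma ln_236_eq: "ln (236::real) = 8 * ln 2 - ln (64/59)"
  using ln_div[of "2^8" "64/59"] ln_realpow[of 2 8] by simp

lemma ln_237_eq: "ln (237::real) = 8 * ln 2 - ln (256/237)"
  using ln_div[of "2^8" "256/237"] ln_realpow[of 2 8] by simp

(* S(n) is close to (2n/pi) (gamma + ln (2n/pi)); the next two inequalities place the solution
   of gamma + ln (2n/pi) = 2 pi between n = 472 and n = 473, with the margins that the error
   terms of the estimates for S(n) require. *)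
lemma euler_mascheroni_ln_236_less:
  "euler_mascheroni + ln 236 + ln (4/pi) + 1/100000 < 2 * (pi :: real)"
proof -
  have "8134563/100000000 \<le> ln (64/59::real)"
    by (rule ln_bounds_from_series(1)[where n=3 and hi=1]; simp add: lessThan_nat_numeral power_divide)
  then show ?thesis
    using euler_mascheroni_bounds_harm_63 harm_63_bounds ln_2_bounds ln_4_div_pi_bounds pi_bounds ln_236_eq
    by linarith
qed

lemma euler_mascheroni_ln_237_greater:
  "2 * pi + 1/10000 + 1/472 + 1/(472*473) < euler_mascheroni + ln 237 + ln (4/(pi :: real))"
proof -
  have "ln (256/237::real) \<le> 7711731/100000000"
    by (rule ln_bounds_from_series(2)[where n=3 and lo=0]; simp add: lessThan_nat_numeral power_divide)
  then show ?thesis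
    using euler_mascheroni_bounds_harm_63 harm_63_bounds ln_2_bounds ln_4_div_pi_bounds pi_bounds ln_237_eq
    by linarith
qed

section \<open>Comparison of the cosecant sum with 4n\<close>

lemma harm_bounds_euler_mascheroni:
  assumes "1 \<le> m"
  shows "harm m \<le> euler_mascheroni + ln (real m + 1) - 1 / (2 * (real m + 1))"
    and "euler_mascheroni + ln (real m + 1) - 1 / (2 * real m) \<le> harm m"
  using euler_mascheroni_bounds[OF assms] by (simp_all add: inverse_eq_divide add.commute)

lemma harm_add_inverse_le_ln_236:
  assumes "m \<le> 235"
  shows "harm m + 1 / (2 * real m + 1) \<le> euler_mascheroni + ln 236 + 1/100000"
proof (cases "m = 0")
  case True
  then have "(harm m :: real) = 0" "1 / (2 * real m + 1) = 1" "ln 2 \<le> ln (236::real)"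
    by (simp_all add: harm_def)
  then show ?thesis
    using euler_mascheroni_gt_19_over_33 ln_2_bounds by linarith
next
  case False
  then have m: "1 \<le> m" by simp
  have "ln (real m + 1) + 1 / (2 * real m + 1) - 1 / (2 * (real m + 1)) \<le> ln 236 + 1/100000"
  proof (cases "m = 235")
    case False
    have "1 / (2 * real m + 1) - 1 / (2 * (real m + 1))
        \<le> 2 * ((real m + 2) - (real m + 1)) / ((real m + 1) + (real m + 2))"
      by (simp add: field_simps divide_le_eq)
    also have "\<dots> \<le> ln (real m + 2) - ln (real m + 1)"
      by (intro ln_inverse_approx_ge) auto
    also have "ln (real m + 2) \<le> ln 236"
      using assms False by simp
    finally show ?thesis by simp
  qed simp
  then show ?thesis
    using harm_bounds_euler_mascheroni(1)[OF m] by linarith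
qed

lemma csc_excess_primitive_pi_div_le:
  assumes "473 \<le> n"
  shows "csc_excess_primitive (pi / real n) \<le> 1/10000"
proof -
  define y where "y = pi / real n"
  have "y \<le> 1/100" using assms pi_less_4 by (simp add: y_def field_simps)
  then have "y^2 \<le> (1/100)^2" by (intro power_mono) (auto simp: y_def)
  have "csc_excess_primitive y \<le> (y^2/8) / (1 - y^2/8)"
    using \<open>y \<le> 1/100\<close> assms by (intro csc_excess_primitive_le) (auto simp: y_def)
  also have "\<dots> \<le> 1/10000"
    using \<open>y^2 \<le> (1/100)^2\<close> by (simp add: field_simps)
  finally show ?thesis by (simp add: y_def)
qed

lemma csc_sum_less:
  assumes "2 \<le> n" "n \<le> 472"
  shows "csc_sum n < 4 * real n"
proof -
  have scale: "2 * real n / pi * B < 4 * real n" if "B < 2 * pi" for B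
    using that assms by (simp add: field_simps)
  show ?thesis
  proof (cases "even n")
    case False
    then obtain m where n: "n = 2*m + 1" using oddE by blast
    with assms have m: "1 \<le> m" "m \<le> 235" by auto
    then have "ln (real m + 1) \<le> ln 236" "0 < 1 / (2 * (real m + 1))" by simp_all
    then have "harm m + ln (4/pi) < 2 * pi"
      using harm_bounds_euler_mascheroni(1)[OF m(1)] euler_mascheroni_ln_236_less by linarith
    then show ?thesis using csc_sum_odd_le[OF n] scale by fastforce
  next
    case True
    define m where "m = n div 2 - 1"
    have n: "n = 2*m + 2" using True assms unfolding m_def by presburger
    with assms have "m \<le> 235" "real n - 1 = 2 * real m + 1" by auto
    then have "harm m + ln (4/pi) + 1 / (real n - 1) < 2 * pi"
      using harm_add_inverse_le_ln_236[of m] euler_mascheroni_ln_236_less by (simp add: add.commute)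
    then show ?thesis using csc_sum_even_le[OF n] scale by fastforce
  qed
qed

lemma csc_sum_greater:
  assumes "473 \<le> n"
  shows "4 * real n < csc_sum n"
proof -
  have scale: "4 * real n < 2 * real n / pi * B" if "2 * pi < B" for B
    using that assms by (simp add: field_simps)
  have G: "csc_excess_primitive (pi / real n) \<le> 1/10000"
    using assms by (rule csc_excess_primitive_pi_div_le)
  show ?thesis
  proof (cases "even n")
    case False
    then obtain m where n: "n = 2*m + 1" using oddE by blast
    with assms have m: "236 \<le> m" by auto
    have "ln 237 \<le> ln (real m + 1)" "1 / (2 * real m) \<le> 1/472" using m by (simp_all add: field_simps)
    moreover have "1 / real n - 1 / (real n - 1) = - (1 / (2 * real m * (2 * real m + 1)))"
      using n m by (simp add: field_simps)
    moreover have "1 / (2 * real m * (2 * real m + 1)) \<le> 1 / (472 * 473)"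
      using m by (intro divide_left_mono mult_mono) auto
    ultimately have "2 * pi < harm m + ln (4/pi) - csc_excess_primitive (pi / real n) + 1 / real n - 1 / (real n - 1)"
      using harm_bounds_euler_mascheroni(2)[of m] m euler_mascheroni_ln_237_greater G by linarith
    then show ?thesis using csc_sum_odd_ge[OF n] m scale by fastforce
  next
    case True
    define m where "m = n div 2 - 1"
    have n: "n = 2*m + 2" using True assms unfolding m_def by presburger
    with assms have m: "236 \<le> m" by auto
    have "ln 237 \<le> ln (real m + 1)" "1 / (2 * real m) \<le> 1/472" using m by (simp_all add: field_simps)
    moreover have "2 / real n - 1 / (real n - 2) = 1 / (2 * real m) - 1 / (real m * (real m + 1))"
      using n m by (simp add: divide_simps) (simp add: algebra_simps)
    moreover have "1 / (real m * (real m + 1)) \<le> 1 / (236 * 237)"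
      using m by (intro divide_left_mono mult_mono) auto
    ultimately have "2 * pi < harm m + ln (4/pi) - csc_excess_primitive (pi / real n) + 2 / real n - 1 / (real n - 2)"
      using harm_bounds_euler_mascheroni(2)[of m] m euler_mascheroni_ln_237_greater G by linarith
    then show ?thesis using csc_sum_even_ge[OF n] m scale by fastforce
  qed
qed


lemma csc_sum_neq: "2 \<le> n \<Longrightarrow> csc_sum n \<noteq> 4 * real n"
  using csc_sum_less[of n] csc_sum_greater[of n] by (cases "n \<le> 472") auto

section \<open>The vertex equation of the polygonal relative equilibrium\<close>

lemma cmod_cis_double_minus_one: "cmod (cis (2 * x) - 1) = 2 * \<bar>sin x\<bar>"
proof -
  have "(cmod (cis (2 * x) - 1))^2 = (cos (2 * x) - 1)^2 + (sin (2 * x))^2"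
    by (simp add: cmod_power2)
  also have "\<dots> = 2 - 2 * cos (2 * x)"
    by (simp add: power2_diff)
  also have "\<dots> = (2 * \<bar>sin x\<bar>)^2"
    by (simp add: cos_double_sin power_mult_distrib)
  finally show ?thesis
    using power2_eq_iff_nonneg[of "cmod (cis (2 * x) - 1)" "2 * \<bar>sin x\<bar>"] by simp
qed

lemma Re_cis_double_minus_one_div_cube:
  assumes "sin x \<noteq> 0"
  shows "Re ((cis (2 * x) - 1) / of_real (cmod (cis (2 * x) - 1) ^ 3)) = - 1 / (4 * \<bar>sin x\<bar>)"
proof -
  have "Re ((cis (2 * x) - 1) / of_real (cmod (cis (2 * x) - 1) ^ 3)) = (cos (2 * x) - 1) / (2 * \<bar>sin x\<bar>)^3"
    by (simp add: cmod_cis_double_minus_one)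
  also have "\<dots> = - 2 * (sin x)^2 / (2 * \<bar>sin x\<bar>)^3"
    by (simp add: cos_double_sin)
  also have "\<dots> = - 1 / (4 * \<bar>sin x\<bar>)"
    using assms by (simp add: field_simps power2_eq_square power3_eq_cube)
  finally show ?thesis .
qed

definition ngon_attraction :: "nat \<Rightarrow> complex" where
  "ngon_attraction n = (\<Sum>k\<in>{1..<n}.
     (cis (2 * pi * real k / real n) - 1) / of_real (cmod (cis (2 * pi * real k / real n) - 1) ^ 3))"

lemma Re_ngon_attraction: "Re (ngon_attraction n) = - csc_sum n / 4"
proof -
  have "Re ((cis (2 * pi * real k / real n) - 1) / of_real (cmod (cis (2 * pi * real k / real n) - 1) ^ 3))
      = - (1 / sin (real k * pi / real n)) / 4" if "k \<in> {1..<n}" for k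
  proof -
    have "0 < sin (real k * pi / real n)"
      using that by (intro sin_gt_zero) (auto simp: field_simps)
    moreover have angle: "2 * pi * real k / real n = 2 * (real k * pi / real n)" by simp
    ultimately show ?thesis
      unfolding angle using Re_cis_double_minus_one_div_cube[of "real k * pi / real n"] by simp
  qed
  then show ?thesis
    by (simp add: ngon_attraction_def csc_sum_def sum_divide_distrib sum_negf)
qed

lemma sum_lessThan_Suc_remove_1:
  fixes f :: "nat \<Rightarrow> 'a::comm_monoid_add"
  shows "(\<Sum>j\<in>{..<n+1} - {1}. f j) = f 0 + (\<Sum>k\<in>{1..<n}. f (k + 1))"
proof -
  have "{..<n+1} - {1} = insert 0 {1+1..<n+1}" by auto
  then have "(\<Sum>j\<in>{..<n+1} - {1}. f j) = f 0 + (\<Sum>j\<in>{1+1..<n+1}. f j)"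
    by (simp del: One_nat_def add_2_eq_Suc' add_2_eq_Suc)
  also have "(\<Sum>j\<in>{1+1..<n+1}. f j) = (\<Sum>k\<in>{1..<n}. f (k + 1))"
    by (rule sum.shift_bounds_nat_ivl)
  finally show ?thesis .
qed

lemma ngon_force_on_vertex:
  "(\<Sum>j\<in>{..<n+1} - {1}. of_real (m1 * mass_sys m0 m1 j) * (ngon_config n a j - a)
      / of_real (cmod (ngon_config n a j - a) ^ 3))
    = of_real m1 * a / of_real (cmod a ^ 3) * (- of_real m0 + of_real m1 * ngon_attraction n)"
proof -
  define \<omega> where "\<omega> k = cis (2 * pi * real k / real n)" for k
  have "ngon_config n a (k + 1) - a = a * (\<omega> k - 1)" for k
    by (simp add: ngon_config_def \<omega>_def algebra_simps)
  then have "of_real (m1 * mass_sys m0 m1 (k + 1)) * (ngon_config n a (k + 1) - a)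
      / of_real (cmod (ngon_config n a (k + 1) - a) ^ 3)
    = of_real m1 * a / of_real (cmod a ^ 3) * (of_real m1 * ((\<omega> k - 1) / of_real (cmod (\<omega> k - 1) ^ 3)))" for k
    by (simp add: mass_sys_def norm_mult power_mult_distrib)
  then show ?thesis
    unfolding sum_lessThan_Suc_remove_1 ngon_attraction_def \<omega>_def[symmetric]
    by (simp add: ngon_config_def mass_sys_def sum_distrib_left algebra_simps)
qed

lemma rel_eq_solution_ngon_mass_relation:
  assumes n: "1 \<le> n" and a: "a \<noteq> 0" and m1: "m1 \<noteq> 0"
    and sol: "rel_eq_solution (n + 1) (mass_sys m0 m1) (ngon_config n a)"
  shows "m0 = cmod a ^ 3 - m1 * csc_sum n / 4"
proof -
  define A where "A = cmod a ^ 3"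
  have "of_real m1 * a / of_real A * (- of_real m0 + of_real m1 * ngon_attraction n)
      = complex_of_real m1 * (- a)"
    using sol[unfolded rel_eq_solution_def, THEN conjunct2, rule_format, of 1 0] n
    unfolding A_def ngon_force_on_vertex[symmetric] by (simp add: ngon_config_def mass_sys_def)
  also have "\<dots> = of_real m1 * a / of_real A * (- of_real A)"
    using a by (simp add: A_def)
  finally have "- of_real m0 + of_real m1 * ngon_attraction n = - of_real A"
    by (rule mult_left_cancel[THEN iffD1, rotated]) (use a m1 in \<open>simp add: A_def\<close>)
  from arg_cong[where f=Re, OF this] show ?thesis
    by (simp add: Re_ngon_attraction A_def)
qed

theorem proposition3:
  fixes n :: nat and a :: complex
  assumes "n \<ge> 2" and "a \<noteq> 0"
  shows "\<not> really_perverse_ngon n a"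
proof
  assume "really_perverse_ngon n a"
  then obtain m0 m1 m0' m1' where
    pos: "m1 > 0" "m1' > 0" and ne: "(m0, m1) \<noteq> (m0', m1')"
    and total: "m0 + real n * m1 = m0' + real n * m1'"
    and sol: "rel_eq_solution (n + 1) (mass_sys m0 m1) (ngon_config n a)"
    and sol': "rel_eq_solution (n + 1) (mass_sys m0' m1') (ngon_config n a)"
    unfolding really_perverse_ngon_def by blast
  have "m0 = cmod a ^ 3 - m1 * csc_sum n / 4" "m0' = cmod a ^ 3 - m1' * csc_sum n / 4"
    using rel_eq_solution_ngon_mass_relation[of n a] assms sol sol' pos by auto
  with total have "(m1 - m1') * (4 * real n - csc_sum n) = 0"
    by (simp add: algebra_simps)
  with csc_sum_neq[OF assms(1)] have "m1 = m1'"
    by simp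
  with total ne show False
    by simp
qed

end
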